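(* Let $\mathcal{H}$ be a complex Hilbert space, $A\in\mathcal{B}(\mathcal{H})$ positive and $S\in\mathcal{B}_A(\mathcal{H})$. Then $$d\omega_A^2(S)\le \omega_A^2\left(S^{\sharp_A}S+S\right)+\omega_A\left(S^{\sharp_A}S^2\right)+\frac12\left\|\left(S^{\sharp_A}S\right)^2+S^{\sharp_A}S\right\|_A .$$
   Context: $\mathcal{B}(\mathcal{H})$ denotes the bounded linear operators on $\mathcal{H}$. For positive $A$, $\langle x,z\rangle_A=\langle Ax,z\rangle$ and $\|z\|_A=\|A^{1/2}z\|$. $\mathcal{B}_A(\mathcal{H})$ is the set of $S\in\mathcal{B}(\mathcal{H})$ for which some $R\in\mathcal{B}(\mathcal{H})$ satisfies $AR=S^*A$; for such $S$, $S^{\sharp_A}=A^{\dagger}S^*A$ with $A^\dagger$ the Moore–Penrose inverse of $A$. For operators $T$ bounded with respect to $\|\cdot\|_A$: $\|T\|_A=\sup_{\|z\|_A=1}\|Tz\|_A$, $\omega_A(T)=\sup_{\|z\|_A=1}|\langle Tz,z\rangle_A|$, and $d\omega_A(T)=\sup_{\|z\|_A=1}(|\langle Tz,z\rangle_A|^2+\|Tz\|_A^4)^{1/2}$. *)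

theory Defs
  imports Complex_Main
begin

class hs_complex_vector = ab_group_add +
  fixes hs_scale :: "complex \<Rightarrow> 'a \<Rightarrow> 'a"  (infixr "*\<^sub>C" 75)
  assumes hs_scale_add_right: "a *\<^sub>C (x + y) = a *\<^sub>C x + a *\<^sub>C y"
    and hs_scale_add_left: "(a + b) *\<^sub>C x = a *\<^sub>C x + b *\<^sub>C x"
    and hs_scale_scale: "a *\<^sub>C (b *\<^sub>C x) = (a * b) *\<^sub>C x"
    and hs_scale_one: "1 *\<^sub>C x = x"

class hs_complex_inner = hs_complex_vector +
  fixes hs_inner :: "'a \<Rightarrow> 'a \<Rightarrow> complex"
  assumes hs_inner_add_left: "hs_inner (x + y) z = hs_inner x z + hs_inner y z"
    and hs_inner_scale_left: "hs_inner (a *\<^sub>C x) y = a * hs_inner x y"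
    and hs_inner_commute: "hs_inner y x = cnj (hs_inner x y)"
    and hs_inner_nonneg: "0 \<le> Re (hs_inner x x)"
    and hs_inner_definite: "hs_inner x x = 0 \<longleftrightarrow> x = 0"

class hs_hilbert = hs_complex_inner +
  assumes hs_complete:
    "\<And>X :: nat \<Rightarrow> 'a.
       (\<forall>e>0. \<exists>N. \<forall>m\<ge>N. \<forall>n\<ge>N. sqrt (Re (hs_inner (X m - X n) (X m - X n))) < e) \<Longrightarrow>
       (\<exists>L. (\<lambda>n. sqrt (Re (hs_inner (X n - L) (X n - L)))) \<longlonglongrightarrow> 0)"

definition hs_norm :: "'a::hs_hilbert \<Rightarrow> real" where
  "hs_norm x = sqrt (Re (hs_inner x x))"

definition bounded_op :: "('a::hs_hilbert \<Rightarrow> 'a) \<Rightarrow> bool" where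
  "bounded_op T \<longleftrightarrow>
     (\<forall>x y. T (x + y) = T x + T y) \<and> (\<forall>a x. T (a *\<^sub>C x) = a *\<^sub>C T x) \<and>
     (\<exists>K. \<forall>x. hs_norm (T x) \<le> K * hs_norm x)"

definition hs_adj :: "('a::hs_hilbert \<Rightarrow> 'a) \<Rightarrow> ('a \<Rightarrow> 'a)" where
  "hs_adj T = (SOME T'. bounded_op T' \<and> (\<forall>x y. hs_inner (T x) y = hs_inner x (T' y)))"

definition positive_op :: "('a::hs_hilbert \<Rightarrow> 'a) \<Rightarrow> bool" where
  "positive_op A \<longleftrightarrow> bounded_op A \<and>
     (\<forall>x. Im (hs_inner (A x) x) = 0 \<and> 0 \<le> Re (hs_inner (A x) x))"

text \<open>Moore--Penrose inverse of A, on its domain R(A) + R(A)^perp: A-dagger y is the unique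
  x in N(A)^perp with A x = P_{closure R(A)} y, i.e. y - A x orthogonal to R(A).\<close>
definition mp_inv :: "('a::hs_hilbert \<Rightarrow> 'a) \<Rightarrow> 'a \<Rightarrow> 'a" where
  "mp_inv A y = (THE x. (\<forall>z. A z = 0 \<longrightarrow> hs_inner x z = 0) \<and>
                        (\<forall>w. hs_inner (y - A x) (A w) = 0))"

definition BA :: "('a::hs_hilbert \<Rightarrow> 'a) \<Rightarrow> ('a \<Rightarrow> 'a) set" where
  "BA A = {S. bounded_op S \<and> (\<exists>R. bounded_op R \<and> A \<circ> R = hs_adj S \<circ> A)}"

definition A_adj :: "('a::hs_hilbert \<Rightarrow> 'a) \<Rightarrow> ('a \<Rightarrow> 'a) \<Rightarrow> ('a \<Rightarrow> 'a)" where
  "A_adj A S = mp_inv A \<circ> hs_adj S \<circ> A"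

definition A_norm :: "('a::hs_hilbert \<Rightarrow> 'a) \<Rightarrow> 'a \<Rightarrow> real" where
  "A_norm A z = sqrt (Re (hs_inner (A z) z))"

text \<open>Suprema over the A-unit sphere; 0 is inserted so that the empty sphere (A = 0)
  gives 0 (all quantities are nonnegative, so nothing changes otherwise).\<close>
definition A_opnorm :: "('a::hs_hilbert \<Rightarrow> 'a) \<Rightarrow> ('a \<Rightarrow> 'a) \<Rightarrow> real" where
  "A_opnorm A T = Sup (insert 0 ((\<lambda>z. A_norm A (T z)) ` {z. A_norm A z = 1}))"

definition A_numrad :: "('a::hs_hilbert \<Rightarrow> 'a) \<Rightarrow> ('a \<Rightarrow> 'a) \<Rightarrow> real" where
  "A_numrad A T = Sup (insert 0 ((\<lambda>z. cmod (hs_inner (A (T z)) z)) ` {z. A_norm A z = 1}))"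

definition A_dwrad :: "('a::hs_hilbert \<Rightarrow> 'a) \<Rightarrow> ('a \<Rightarrow> 'a) \<Rightarrow> real" where
  "A_dwrad A T = Sup (insert 0 ((\<lambda>z. sqrt ((cmod (hs_inner (A (T z)) z))\<^sup>2 + (A_norm A (T z)) ^ 4))
                                 ` {z. A_norm A z = 1}))"

end

theory Submission
  imports Defs
begin

text \<open>For an \<open>A\<close>-unit vector \<open>z\<close> put \<open>a = \<langle>S z, z\<rangle>\<^sub>A\<close> and
  \<open>b = \<parallel>S z\<parallel>\<^sub>A\<^sup>2 = \<langle>S\<^sup>\<sharp> S z, z\<rangle>\<^sub>A\<close>. Then \<open>|a|\<^sup>2 + b\<^sup>2 \<le> |a + b|\<^sup>2 + 2 b |a|\<close> with
  \<open>a + b = \<langle>(S\<^sup>\<sharp> S + S) z, z\<rangle>\<^sub>A\<close>, and Buzano's inequality bounds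
  \<open>2 b |a| = 2 |\<langle>S z, z\<rangle>\<^sub>A \<langle>z, S\<^sup>\<sharp> S z\<rangle>\<^sub>A|\<close> by
  \<open>\<parallel>S z\<parallel>\<^sub>A \<parallel>S\<^sup>\<sharp> S z\<parallel>\<^sub>A + |\<langle>S\<^sup>\<sharp> S\<^sup>2 z, z\<rangle>\<^sub>A|\<close>, where finally
  \<open>2 \<parallel>S z\<parallel>\<^sub>A \<parallel>S\<^sup>\<sharp> S z\<parallel>\<^sub>A \<le> \<parallel>S z\<parallel>\<^sub>A\<^sup>2 + \<parallel>S\<^sup>\<sharp> S z\<parallel>\<^sub>A\<^sup>2 = Re \<langle>((S\<^sup>\<sharp> S)\<^sup>2 + S\<^sup>\<sharp> S) z, z\<rangle>\<^sub>A\<close>.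

  Passing to suprema needs \<open>S\<close> and \<open>S\<^sup>\<sharp>\<close> to be bounded for \<open>\<parallel>\<cdot>\<parallel>\<^sub>A\<close>, although
  \<open>S\<^sup>\<sharp> = A\<^sup>\<dagger> S\<^sup>* A\<close> need not be a bounded operator. For the bounded \<open>R\<close> with
  \<open>A R = S\<^sup>* A\<close>, the operator \<open>V = R S\<close> is bounded and \<open>A\<close>-selfadjoint, and \<open>n\<close>-fold use
  of Cauchy--Schwarz gives
  \<open>\<parallel>V x\<parallel>\<^sub>A\<^bsup>2^n\<^esup> \<le> \<parallel>V\<^bsup>2^n\<^esup> x\<parallel>\<^sub>A \<parallel>x\<parallel>\<^sub>A\<^bsup>2^n - 1\<^esup> \<le> C \<parallel>V\<parallel>\<^bsup>2^n\<^esup> \<parallel>x\<parallel> \<parallel>x\<parallel>\<^sub>A\<^bsup>2^n - 1\<^esup>\<close>;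
  taking \<open>2\<^sup>n\<close>-th roots, \<open>\<parallel>V x\<parallel>\<^sub>A \<le> \<parallel>V\<parallel> \<parallel>x\<parallel>\<^sub>A\<close>. Then \<open>\<parallel>S x\<parallel>\<^sub>A\<^sup>2 = \<langle>x, V x\<rangle>\<^sub>A\<close>
  and \<open>\<parallel>S\<^sup>\<sharp> x\<parallel>\<^sub>A\<^sup>2 = \<langle>x, S S\<^sup>\<sharp> x\<rangle>\<^sub>A\<close> bound \<open>S\<close> and \<open>S\<^sup>\<sharp>\<close>.\<close>

section \<open>Complex vector spaces and semi-inner products\<close>

lemma hs_scale_zero_left [simp]: "(0::complex) *\<^sub>C (x::'a::hs_complex_vector) = 0"
proof -
  have "(0 + 0::complex) *\<^sub>C x = 0 *\<^sub>C x + 0 *\<^sub>C x" by (rule hs_scale_add_left)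
  then show ?thesis by simp
qed

lemma hs_scale_zero_right [simp]: "a *\<^sub>C (0::'a::hs_complex_vector) = 0"
proof -
  have "a *\<^sub>C (0 + 0) = a *\<^sub>C 0 + a *\<^sub>C (0::'a)" by (rule hs_scale_add_right)
  then show ?thesis by simp
qed

lemma hs_scale_minus_left: "(- a) *\<^sub>C (x::'a::hs_complex_vector) = - (a *\<^sub>C x)"
  by (rule add_eq_0_iff [THEN iffD1]) (simp add: hs_scale_add_left [symmetric])

lemma hs_scale_minus_right: "a *\<^sub>C (- x::'a::hs_complex_vector) = - (a *\<^sub>C x)"
  by (rule add_eq_0_iff [THEN iffD1]) (simp add: hs_scale_add_right [symmetric])

lemma hs_scale_diff_right: "a *\<^sub>C (x - y::'a::hs_complex_vector) = a *\<^sub>C x - a *\<^sub>C y"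
  by (simp only: diff_conv_add_uminus hs_scale_add_right hs_scale_minus_right)

lemma hs_scale_half_add_self: "(1/2::complex) *\<^sub>C (x + x) = (x::'a::hs_complex_vector)"
proof -
  have "x + x = (1 + 1) *\<^sub>C x" by (simp only: hs_scale_add_left hs_scale_one)
  then show ?thesis by (simp add: hs_scale_scale hs_scale_one)
qed

lemma quadratic_nonneg_imp_le:
  fixes a c d :: real
  assumes "0 \<le> d" and nonneg: "\<And>s. 0 \<le> a - 2 * s * c + s\<^sup>2 * c * d"
  shows "c \<le> a * d"
proof (cases "d = 0")
  case True
  have "0 \<le> a - 2 * ((a + 1) / (2 * c)) * c" if "c \<noteq> 0"
    using nonneg [of "(a + 1) / (2 * c)"] True by simp
  then show ?thesis using True by (cases "c = 0") simp_all
next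
  case False
  then have "0 \<le> a - c / d" using nonneg [of "1 / d"] by (simp add: power2_eq_square)
  then show ?thesis using False \<open>0 \<le> d\<close> by (simp add: field_simps)
qed

lemma power2_le_mult_imp_le:
  fixes x a :: real
  assumes "x\<^sup>2 \<le> a * x" and "0 \<le> a"
  shows "x \<le> a"
proof (cases "x > 0")
  case True
  then show ?thesis using assms(1) by (simp add: power2_eq_square)
qed (use assms(2) in simp)

lemma power_two_power_le_imp_le:
  fixes a b D :: real
  assumes "0 < b" and le: "\<And>n. a ^ (2 ^ n) \<le> D * b ^ (2 ^ n)"
  shows "a \<le> b"
proof (rule ccontr)
  assume "\<not> a \<le> b"
  then have q: "a / b > 1" using \<open>0 < b\<close> by simp
  then obtain n where "D < (a / b) ^ n" using real_arch_pow by blast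
  also have "\<dots> \<le> (a / b) ^ (2 ^ n)"
    using q by (intro power_increasing) (simp_all add: less_imp_le)
  also have "\<dots> \<le> D"
    using le [of n] \<open>0 < b\<close> by (simp add: power_divide pos_divide_le_eq)
  finally show False by simp
qed

locale semi_inner_product =
  fixes B :: "'a::hs_complex_vector \<Rightarrow> 'a \<Rightarrow> complex"
  assumes add_left: "B (x + y) z = B x z + B y z"
    and scale_left: "B (a *\<^sub>C x) y = a * B x y"
    and commute: "B y x = cnj (B x y)"
    and nonneg: "0 \<le> Re (B x x)"
begin

definition seminorm :: "'a \<Rightarrow> real" where
  "seminorm x = sqrt (Re (B x x))"

lemma add_right: "B x (y + z) = B x y + B x z"
  using commute [of x "y + z"] commute [of x y] commute [of x z] add_left [of y z x] by simp

lemma scale_right: "B x (a *\<^sub>C y) = cnj a * B x y"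
  using commute [of x "a *\<^sub>C y"] commute [of x y] scale_left [of a y x] by simp

lemma zero_left [simp]: "B 0 y = 0"
  using scale_left [of 0 x y] by simp

lemma zero_right [simp]: "B x 0 = 0"
  using commute [of 0 x] by simp

lemma minus_left: "B (- x) y = - B x y"
  by (rule add_eq_0_iff [THEN iffD1]) (simp add: add_left [symmetric])

lemma minus_right: "B x (- y) = - B x y"
  by (rule add_eq_0_iff [THEN iffD1]) (simp add: add_right [symmetric])

lemma diff_left: "B (x - y) z = B x z - B y z"
  by (simp only: diff_conv_add_uminus add_left minus_left)

lemma diff_right: "B x (y - z) = B x y - B x z"
  by (simp only: diff_conv_add_uminus add_right minus_right)

lemma Im_self [simp]: "Im (B x x) = 0"
  using arg_cong [OF commute [of x x], of Im] by simp

lemma of_real_Re_self: "complex_of_real (Re (B x x)) = B x x"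
  by (simp add: complex_eq_iff)

lemma seminorm_nonneg [simp]: "0 \<le> seminorm x"
  by (simp add: seminorm_def nonneg)

lemma power2_seminorm: "(seminorm x)\<^sup>2 = Re (B x x)"
  by (simp add: seminorm_def nonneg)

lemma Re_self_add: "Re (B (x + y) (x + y)) = Re (B x x) + 2 * Re (B x y) + Re (B y y)"
  using commute [of x y] by (simp add: add_left add_right)

lemma Re_self_diff: "Re (B (x - y) (x - y)) = Re (B x x) - 2 * Re (B x y) + Re (B y y)"
  using commute [of x y] by (simp add: diff_left diff_right)

lemma parallelogram:
  "(seminorm (x + y))\<^sup>2 + (seminorm (x - y))\<^sup>2 = 2 * (seminorm x)\<^sup>2 + 2 * (seminorm y)\<^sup>2"
  by (simp add: power2_seminorm Re_self_add Re_self_diff)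

lemma Re_self_diff_scale:
  "Re (B (x - (complex_of_real s * B x y) *\<^sub>C y) (x - (complex_of_real s * B x y) *\<^sub>C y))
     = Re (B x x) - 2 * s * (cmod (B x y))\<^sup>2 + s\<^sup>2 * (cmod (B x y))\<^sup>2 * Re (B y y)"
proof -
  let ?t = "complex_of_real s * B x y" and ?n = "complex_of_real ((cmod (B x y))\<^sup>2)"
  have n: "B x y * cnj (B x y) = ?n" by (rule complex_norm_square [symmetric])
  have "B (x - ?t *\<^sub>C y) (x - ?t *\<^sub>C y)
          = B x x - 2 * complex_of_real s * ?n + complex_of_real s ^ 2 * ?n * B y y"
    using commute [of x y] n by (simp add: mult.commute [of "cnj _"] diff_left diff_right scale_left scale_right algebra_simps power2_eq_square)
  then show ?thesis by (simp add: power2_eq_square)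
qed

lemma cauchy_schwarz: "cmod (B x y) \<le> seminorm x * seminorm y"
proof -
  have "(cmod (B x y))\<^sup>2 \<le> Re (B x x) * Re (B y y)"
  proof (rule quadratic_nonneg_imp_le)
    show "0 \<le> Re (B x x) - 2 * s * (cmod (B x y))\<^sup>2 + s\<^sup>2 * (cmod (B x y))\<^sup>2 * Re (B y y)" for s
      using nonneg [of "x - (complex_of_real s * B x y) *\<^sub>C y"] by (simp only: Re_self_diff_scale)
  qed (rule nonneg)
  then have "(cmod (B x y))\<^sup>2 \<le> (seminorm x * seminorm y)\<^sup>2"
    by (simp add: power_mult_distrib power2_seminorm)
  then show ?thesis by (rule power2_le_imp_le) simp
qed

lemma Re_le_seminorm_mult: "Re (B x y) \<le> seminorm x * seminorm y"
  using cauchy_schwarz [of x y] complex_Re_le_cmod [of "B x y"] by linarith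

lemma seminorm_triangle: "seminorm (x + y) \<le> seminorm x + seminorm y"
proof -
  have "(seminorm (x + y))\<^sup>2 \<le> (seminorm x + seminorm y)\<^sup>2"
    using Re_le_seminorm_mult [of x y] by (simp add: power2_seminorm Re_self_add power2_sum)
  then show ?thesis by (rule power2_le_imp_le) simp
qed

lemma seminorm_scale: "seminorm (a *\<^sub>C x) = cmod a * seminorm x"
proof -
  have "a * cnj a = complex_of_real ((cmod a)\<^sup>2)" by (rule complex_norm_square [symmetric])
  then have "B (a *\<^sub>C x) (a *\<^sub>C x) = complex_of_real ((cmod a)\<^sup>2) * B x x"
    by (simp add: scale_left scale_right mult.assoc [symmetric] mult.commute [of "cnj a"])
  then show ?thesis by (simp add: seminorm_def real_sqrt_mult)
qed

lemma seminorm_minus_commute: "seminorm (x - y) = seminorm (y - x)"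
  using seminorm_scale [of "-1" "x - y"] by (simp add: hs_scale_minus_left hs_scale_one)

text \<open>Buzano's inequality: reflecting \<open>y\<close> in the line through the unit vector \<open>e\<close>
  gives \<open>w = 2 B y e e - y\<close> with \<open>seminorm w = seminorm y\<close>, and Cauchy--Schwarz for
  \<open>B x w\<close> is the claim.\<close>
lemma buzano:
  assumes "seminorm e = 1"
  shows "cmod (B x e * B e y) \<le> (seminorm x * seminorm y + cmod (B x y)) / 2"
proof -
  define w where "w = (2 * B y e) *\<^sub>C e - y"
  have "B e e = 1" using assms of_real_Re_self [of e] power2_seminorm [of e] by simp
  moreover have "B e y = cnj (B y e)" by (rule commute)
  ultimately have "B w w = B y y"
    unfolding w_def by (simp add: diff_left diff_right scale_left scale_right algebra_simps)
  then have "seminorm w = seminorm y" by (simp add: seminorm_def)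
  moreover have "B x w = 2 * B x e * B e y - B x y"
    unfolding w_def by (simp add: diff_right scale_right commute [of e y])
  ultimately have "cmod (2 * B x e * B e y - B x y) \<le> seminorm x * seminorm y"
    using cauchy_schwarz [of x w] by simp
  then have "cmod (2 * (B x e * B e y)) \<le> seminorm x * seminorm y + cmod (B x y)"
    using norm_triangle_ineq2 [of "2 * B x e * B e y" "B x y"] by (simp add: mult.assoc)
  then show ?thesis by (simp add: norm_mult)
qed

lemma seminorm_diff_le_midpoint:
  assumes "d \<le> (seminorm (w - (1/2) *\<^sub>C (x + y)))\<^sup>2"
  shows "(seminorm (x - y))\<^sup>2 \<le> 2 * (seminorm (w - x))\<^sup>2 + 2 * (seminorm (w - y))\<^sup>2 - 4 * d"
proof -
  have "(1/2) *\<^sub>C ((w - x) + (w - y)) = w - (1/2) *\<^sub>C (x + y)"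
    by (metis add_diff_add hs_scale_diff_right hs_scale_half_add_self)
  then have "seminorm ((w - x) + (w - y)) = 2 * seminorm (w - (1/2) *\<^sub>C (x + y))"
    using seminorm_scale [of "1/2" "(w - x) + (w - y)"] by simp
  then have "4 * d \<le> (seminorm ((w - x) + (w - y)))\<^sup>2"
    using assms by (simp add: power_mult_distrib)
  moreover have "(seminorm ((w - x) - (w - y)))\<^sup>2 = (seminorm (x - y))\<^sup>2"
    using seminorm_minus_commute [of x y] by simp
  ultimately show ?thesis
    using parallelogram [of "w - x" "w - y"] by linarith
qed

lemma davis_wielandt_bound:
  assumes adj: "\<And>u v. B (T u) v = B u (S v)" and z: "seminorm z = 1"
  shows "(cmod (B (S z) z))\<^sup>2 + (seminorm (S z)) ^ 4
     \<le> (cmod (B (T (S z) + S z) z))\<^sup>2 + cmod (B (T (S (S z))) z)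
       + 1/2 * seminorm (T (S (T (S z))) + T (S z))"
proof -
  define a where "a = B (S z) z"
  define b where "b = (seminorm (S z))\<^sup>2"
  define u where "u = T (S z)"
  have "b \<ge> 0" by (simp add: b_def)
  have uz: "B u z = complex_of_real b"
    unfolding u_def adj b_def power2_seminorm by (rule of_real_Re_self [symmetric])
  have zu: "B z u = complex_of_real b"
    by (simp only: commute [of z u] uz complex_cnj_complex_of_real)
  have "(cmod a)\<^sup>2 + b\<^sup>2 \<le> (cmod (complex_of_real b + a))\<^sup>2 + 2 * b * cmod a"
  proof -
    have "- (b * cmod a) \<le> b * Re a"
      using abs_Re_le_cmod [of a] \<open>b \<ge> 0\<close> mult_left_mono [of "- cmod a" "Re a" b] by simp
    then show ?thesis by (simp add: cmod_power2 power2_sum algebra_simps)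
  qed
  also have "complex_of_real b + a = B (u + S z) z"
    by (simp add: add_left uz a_def)
  also have "2 * b * cmod a \<le> seminorm (S z) * seminorm u + cmod (B (S z) u)"
    using buzano [OF z, of "S z" u] \<open>b \<ge> 0\<close> by (simp add: a_def zu norm_mult mult.commute)
  also have "B (S z) u = B (T (S (S z))) z"
    unfolding u_def adj by (metis adj commute)
  also have "seminorm (S z) * seminorm u \<le> (b + (seminorm u)\<^sup>2) / 2"
    using sum_squares_bound [of "seminorm (S z)" "seminorm u"] by (simp add: b_def power2_eq_square)
  also have "b + (seminorm u)\<^sup>2 = Re (B (T (S u) + u) z)"
  proof -
    have "B u u = cnj (B (T (S u)) z)"
      by (metis adj commute u_def)
    then show ?thesis by (simp add: power2_seminorm add_left uz)
  qed
  also have "\<dots> \<le> seminorm (T (S u) + u)"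
    using Re_le_seminorm_mult [of "T (S u) + u" z] z by simp
  finally show ?thesis
    by (simp add: a_def b_def u_def power_mult [symmetric] add_divide_distrib)
qed

end

section \<open>Closed subspaces and orthogonal projection\<close>

interpretation hs: semi_inner_product "hs_inner :: 'a::hs_hilbert \<Rightarrow> 'a \<Rightarrow> complex"
  rewrites "semi_inner_product.seminorm hs_inner = hs_norm"
proof -
  show "semi_inner_product (hs_inner :: 'a \<Rightarrow> 'a \<Rightarrow> complex)"
    by unfold_locales (auto simp: hs_inner_add_left hs_inner_scale_left hs_inner_nonneg intro: hs_inner_commute)
  then show "semi_inner_product.seminorm hs_inner = (hs_norm :: 'a \<Rightarrow> real)"
    by (simp add: fun_eq_iff semi_inner_product.seminorm_def hs_norm_def)
qed

definition closed_subspace :: "'a::hs_hilbert set \<Rightarrow> bool" where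
  "closed_subspace M \<longleftrightarrow> 0 \<in> M \<and> (\<forall>x\<in>M. \<forall>y\<in>M. x + y \<in> M) \<and> (\<forall>a. \<forall>x\<in>M. a *\<^sub>C x \<in> M)
     \<and> (\<forall>X L. (\<forall>n. X n \<in> M) \<longrightarrow> (\<lambda>n. hs_norm (X n - L)) \<longlonglongrightarrow> 0 \<longrightarrow> L \<in> M)"

lemma hs_convergent_if_dist_bound:
  fixes X :: "nat \<Rightarrow> 'a::hs_hilbert"
  assumes dist: "\<And>m n. (hs_norm (X m - X n))\<^sup>2 \<le> e m + e n" and e: "e \<longlonglongrightarrow> 0"
  obtains L where "(\<lambda>n. hs_norm (X n - L)) \<longlonglongrightarrow> 0"
proof -
  have "\<exists>N. \<forall>m\<ge>N. \<forall>n\<ge>N. hs_norm (X m - X n) < \<epsilon>" if "\<epsilon> > 0" for \<epsilon>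
  proof -
    have "\<forall>\<^sub>F n in sequentially. e n < \<epsilon>\<^sup>2 / 2"
      using e by (rule order_tendstoD) (use \<open>\<epsilon> > 0\<close> in simp)
    then obtain N where N: "\<And>n. n \<ge> N \<Longrightarrow> e n < \<epsilon>\<^sup>2 / 2"
      unfolding eventually_sequentially by blast
    have "hs_norm (X m - X n) < \<epsilon>" if "m \<ge> N" "n \<ge> N" for m n
    proof -
      have "(hs_norm (X m - X n))\<^sup>2 < \<epsilon>\<^sup>2" using dist [of m n] N [OF that(1)] N [OF that(2)] by linarith
      then show ?thesis using \<open>\<epsilon> > 0\<close> by (simp add: power_less_imp_less_base)
    qed
    then show ?thesis by blast
  qed
  then obtain L where "(\<lambda>n. hs_norm (X n - L)) \<longlonglongrightarrow> 0"
    using hs_complete [of X] unfolding hs_norm_def by blast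
  then show ?thesis by (rule that)
qed

lemma closed_subspace_nearest_point:
  assumes "closed_subspace M"
  obtains m where "m \<in> M" "\<And>v. v \<in> M \<Longrightarrow> hs_norm (w - m) \<le> hs_norm (w - v)"
proof -
  define D where "D = Inf ((\<lambda>v. (hs_norm (w - v))\<^sup>2) ` M)"
  define e :: "nat \<Rightarrow> real" where "e n = 2 * inverse (real (Suc n))" for n
  have "0 \<in> M" using assms by (simp add: closed_subspace_def)
  have bdd: "bdd_below ((\<lambda>v. (hs_norm (w - v))\<^sup>2) ` M)"
    by (rule bdd_belowI [of _ 0]) auto
  have D_le: "D \<le> (hs_norm (w - v))\<^sup>2" if "v \<in> M" for v
    unfolding D_def using bdd that by (auto intro: cInf_lower)
  have "\<exists>v\<in>M. (hs_norm (w - v))\<^sup>2 < D + e n / 2" for n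
    using cInf_lessD [of "(\<lambda>v. (hs_norm (w - v))\<^sup>2) ` M" "D + e n / 2"] \<open>0 \<in> M\<close>
    unfolding D_def e_def by auto
  then obtain v where v: "\<And>n. v n \<in> M" and v_D: "\<And>n. (hs_norm (w - v n))\<^sup>2 < D + e n / 2"
    by metis
  have "(hs_norm (v m - v n))\<^sup>2 \<le> e m + e n" for m n
  proof -
    have "(1/2) *\<^sub>C (v m + v n) \<in> M" using assms v by (simp add: closed_subspace_def)
    then have "(hs_norm (v m - v n))\<^sup>2 \<le> 2 * (hs_norm (w - v m))\<^sup>2 + 2 * (hs_norm (w - v n))\<^sup>2 - 4 * D"
      by (intro hs.seminorm_diff_le_midpoint D_le)
    then show ?thesis using v_D [of m] v_D [of n] by linarith
  qed
  moreover have "e \<longlonglongrightarrow> 0"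
    unfolding e_def using tendsto_mult_right_zero [OF LIMSEQ_inverse_real_of_nat] by simp
  ultimately obtain L where L: "(\<lambda>n. hs_norm (v n - L)) \<longlonglongrightarrow> 0"
    by (rule hs_convergent_if_dist_bound)
  have "L \<in> M" using assms v L unfolding closed_subspace_def by blast
  have "hs_norm (w - L) \<le> sqrt (D + 0) + 0"
  proof (rule LIMSEQ_le_const [where X = "\<lambda>n. sqrt (D + e n / 2) + hs_norm (v n - L)"])
    show "(\<lambda>n. sqrt (D + e n / 2) + hs_norm (v n - L)) \<longlonglongrightarrow> sqrt (D + 0) + 0"
      using \<open>e \<longlonglongrightarrow> 0\<close> L by (intro tendsto_intros) simp_all
    have "hs_norm (w - L) \<le> sqrt (D + e n / 2) + hs_norm (v n - L)" for n
    proof -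
      have "hs_norm (w - v n) \<le> sqrt (D + e n / 2)"
        using v_D [of n] by (simp add: real_le_rsqrt)
      then show ?thesis using hs.seminorm_triangle [of "w - v n" "v n - L"] by simp
    qed
    then show "\<exists>N. \<forall>n\<ge>N. hs_norm (w - L) \<le> sqrt (D + e n / 2) + hs_norm (v n - L)" by blast
  qed
  moreover have "sqrt D \<le> hs_norm (w - u)" if "u \<in> M" for u
    using real_sqrt_le_mono [OF D_le [OF that]] by simp
  ultimately have "hs_norm (w - L) \<le> hs_norm (w - u)" if "u \<in> M" for u
    using that by fastforce
  with \<open>L \<in> M\<close> show ?thesis by (rule that)
qed

lemma nearest_point_orthogonal:
  assumes "closed_subspace M" "m \<in> M" "\<And>v. v \<in> M \<Longrightarrow> hs_norm (w - m) \<le> hs_norm (w - v)"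
    and "u \<in> M"
  shows "hs_inner (w - m) u = 0"
proof -
  let ?c = "hs_inner (w - m) u"
  have "(cmod ?c)\<^sup>2 \<le> 0 * Re (hs_inner u u)"
  proof (rule quadratic_nonneg_imp_le)
    fix s :: real
    let ?t = "complex_of_real s * ?c"
    have "m + ?t *\<^sub>C u \<in> M" using assms by (simp add: closed_subspace_def)
    then have "hs_norm (w - m) \<le> hs_norm ((w - m) - ?t *\<^sub>C u)"
      using assms(3) by (simp add: diff_diff_eq)
    then have "(hs_norm (w - m))\<^sup>2 \<le> (hs_norm ((w - m) - ?t *\<^sub>C u))\<^sup>2"
      by (simp add: power_mono)
    then show "0 \<le> 0 - 2 * s * (cmod ?c)\<^sup>2 + s\<^sup>2 * (cmod ?c)\<^sup>2 * Re (hs_inner u u)"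
      by (simp add: hs.power2_seminorm hs.Re_self_diff_scale)
  qed (rule hs_inner_nonneg)
  then show ?thesis by simp
qed

lemma orthogonal_projection_exists:
  assumes "closed_subspace M"
  obtains m where "m \<in> M" "\<And>v. v \<in> M \<Longrightarrow> hs_inner (w - m) v = 0"
proof -
  obtain m where "m \<in> M" "\<And>v. v \<in> M \<Longrightarrow> hs_norm (w - m) \<le> hs_norm (w - v)"
    using closed_subspace_nearest_point [OF assms] by blast
  then show ?thesis using nearest_point_orthogonal [OF assms] that by blast
qed

section \<open>Bounded operators, Riesz representation and adjoints\<close>

lemma bounded_opE:
  assumes "bounded_op T"
  obtains K where "K \<ge> 0" "\<And>x. hs_norm (T x) \<le> K * hs_norm x"
proof -
  obtain K where "\<And>x. hs_norm (T x) \<le> K * hs_norm x" using assms unfolding bounded_op_def by blast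
  then have "hs_norm (T x) \<le> max K 0 * hs_norm x" for x
    by (meson hs.seminorm_nonneg max.cobounded1 mult_right_mono order_trans)
  then show ?thesis using that [of "max K 0"] by simp
qed

lemma bounded_op_add: "bounded_op T \<Longrightarrow> T (x + y) = T x + T y"
  by (simp add: bounded_op_def)

lemma bounded_op_scale: "bounded_op T \<Longrightarrow> T (a *\<^sub>C x) = a *\<^sub>C T x"
  by (simp add: bounded_op_def)

lemma bounded_op_zero: "bounded_op T \<Longrightarrow> T 0 = 0"
  using bounded_op_scale [of T 0 0] by simp

lemma bounded_op_diff: "bounded_op T \<Longrightarrow> T (x - y) = T x - T y"
  using bounded_op_add [of T "x - y" y] by (simp add: eq_diff_eq)

lemma bounded_op_comp: "bounded_op T \<Longrightarrow> bounded_op U \<Longrightarrow> bounded_op (T \<circ> U)"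
proof -
  assume T: "bounded_op T" and U: "bounded_op U"
  obtain K1 where "K1 \<ge> 0" and K1: "\<And>x. hs_norm (T x) \<le> K1 * hs_norm x"
    using bounded_opE [OF T] by blast
  obtain K2 where K2: "\<And>x. hs_norm (U x) \<le> K2 * hs_norm x" using bounded_opE [OF U] by blast
  have "hs_norm (T (U x)) \<le> (K1 * K2) * hs_norm x" for x
  proof -
    have "hs_norm (T (U x)) \<le> K1 * hs_norm (U x)" by (rule K1)
    also have "\<dots> \<le> K1 * (K2 * hs_norm x)" using K2 \<open>K1 \<ge> 0\<close> by (rule mult_left_mono)
    finally show ?thesis by (simp add: mult.assoc)
  qed
  then show ?thesis using T U unfolding bounded_op_def by auto
qed

lemma funpow_hs_norm_le:
  fixes T :: "'a::hs_hilbert \<Rightarrow> 'a"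
  assumes "K \<ge> 0" and "\<And>x. hs_norm (T x) \<le> K * hs_norm x"
  shows "hs_norm ((T ^^ n) x) \<le> K ^ n * hs_norm x"
proof (induction n)
  case (Suc n)
  have "hs_norm ((T ^^ Suc n) x) \<le> K * hs_norm ((T ^^ n) x)" using assms(2) [of "(T ^^ n) x"] by simp
  also have "\<dots> \<le> K * (K ^ n * hs_norm x)" using Suc assms(1) by (rule mult_left_mono)
  finally show ?case by (simp add: mult.assoc)
qed simp

lemma closed_subspace_kernel_functional:
  fixes f :: "'a::hs_hilbert \<Rightarrow> complex"
  assumes add: "\<And>x y. f (x + y) = f x + f y" and scale: "\<And>a x. f (a *\<^sub>C x) = a * f x"
    and bound: "\<And>x. cmod (f x) \<le> K * hs_norm x"
  shows "closed_subspace {x. f x = 0}"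
  unfolding closed_subspace_def
proof (intro conjI allI impI ballI; simp?)
  show "f 0 = 0" using scale [of 0 0] by simp
  show "f (x + y) = 0" if "f x = 0" "f y = 0" for x y using that add by simp
  show "f (a *\<^sub>C x) = 0" if "f x = 0" for a x using that scale by simp
  fix X L assume X: "\<forall>n. f (X n) = 0" and L: "(\<lambda>n. hs_norm (X n - L)) \<longlonglongrightarrow> 0"
  have "cmod (f L) \<le> K * 0"
  proof (rule LIMSEQ_le_const)
    show "(\<lambda>n. K * hs_norm (X n - L)) \<longlonglongrightarrow> K * 0" by (intro tendsto_intros L)
    have "cmod (f L) \<le> K * hs_norm (X n - L)" for n
    proof -
      have "f L = f (L - X n)" using add [of "L - X n" "X n"] X by simp
      then show ?thesis using bound [of "L - X n"] hs.seminorm_minus_commute [of L "X n"] by simp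
    qed
    then show "\<exists>N. \<forall>n\<ge>N. cmod (f L) \<le> K * hs_norm (X n - L)" by blast
  qed
  then show "f L = 0" by simp
qed

lemma closed_subspace_kernel:
  assumes T: "bounded_op T"
  shows "closed_subspace {x. T x = 0}"
  unfolding closed_subspace_def
proof (intro conjI allI impI ballI; simp?)
  show "T 0 = 0" using T by (rule bounded_op_zero)
  show "T (x + y) = 0" if "T x = 0" "T y = 0" for x y using that bounded_op_add [OF T] by simp
  show "T (a *\<^sub>C x) = 0" if "T x = 0" for a x using that bounded_op_scale [OF T] by simp
  fix X L assume X: "\<forall>n. T (X n) = 0" and L: "(\<lambda>n. hs_norm (X n - L)) \<longlonglongrightarrow> 0"
  obtain K where K: "\<And>x. hs_norm (T x) \<le> K * hs_norm x" using bounded_opE [OF T] by blast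
  have "closed_subspace {x. hs_inner (T x) (T L) = 0}"
  proof (rule closed_subspace_kernel_functional)
    fix x
    have "cmod (hs_inner (T x) (T L)) \<le> hs_norm (T x) * hs_norm (T L)" by (rule hs.cauchy_schwarz)
    also have "\<dots> \<le> K * hs_norm x * hs_norm (T L)" by (rule mult_right_mono [OF K]) simp
    finally show "cmod (hs_inner (T x) (T L)) \<le> (K * hs_norm (T L)) * hs_norm x" by (simp add: ac_simps)
  qed (simp_all add: bounded_op_add [OF T] bounded_op_scale [OF T] hs_inner_add_left hs_inner_scale_left)
  moreover have "\<forall>n. X n \<in> {x. hs_inner (T x) (T L) = 0}" using X by simp
  ultimately have "hs_inner (T L) (T L) = 0" using L unfolding closed_subspace_def by blast
  then show "T L = 0" using hs_inner_definite by blast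
qed

text \<open>For \<open>f w \<noteq> 0\<close>, the component \<open>e\<close> of \<open>w\<close> orthogonal to the kernel is orthogonal to
  \<open>x - (f x / f e) e\<close>, which lies in the kernel; so \<open>f\<close> is represented by a multiple of \<open>e\<close>.\<close>
lemma riesz_representation:
  fixes f :: "'a::hs_hilbert \<Rightarrow> complex"
  assumes add: "\<And>x y. f (x + y) = f x + f y" and scale: "\<And>a x. f (a *\<^sub>C x) = a * f x"
    and bound: "\<And>x. cmod (f x) \<le> K * hs_norm x"
  shows "\<exists>y. \<forall>x. f x = hs_inner x y"
proof (cases "\<forall>x. f x = 0")
  case True
  then show ?thesis by (intro exI [of _ 0]) simp
next
  case False
  then obtain w where "f w \<noteq> 0" by blast
  have f_diff: "f (x - y) = f x - f y" for x y using add [of "x - y" y] by (simp add: eq_diff_eq)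
  obtain m where "m \<in> {x. f x = 0}" and orth: "\<And>v. v \<in> {x. f x = 0} \<Longrightarrow> hs_inner (w - m) v = 0"
    using orthogonal_projection_exists [OF closed_subspace_kernel_functional [OF add scale bound]] by blast
  then have m: "f m = 0" by simp
  define e where "e = w - m"
  have "f e \<noteq> 0" using \<open>f w \<noteq> 0\<close> m by (simp add: e_def f_diff)
  then have "e \<noteq> 0" using scale [of 0 0] by auto
  then have "hs_inner e e \<noteq> 0" using hs_inner_definite by blast
  have "f x = hs_inner x (cnj (f e / hs_inner e e) *\<^sub>C e)" for x
  proof -
    have "f (x - (f x / f e) *\<^sub>C e) = 0" using \<open>f e \<noteq> 0\<close> by (simp add: f_diff scale)
    then have "hs_inner e (x - (f x / f e) *\<^sub>C e) = 0" using orth unfolding e_def by simp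
    then have "hs_inner (x - (f x / f e) *\<^sub>C e) e = 0"
      using hs_inner_commute [of "x - (f x / f e) *\<^sub>C e" e] by simp
    then have "hs_inner x e = (f x / f e) * hs_inner e e"
      by (simp add: hs.diff_left hs_inner_scale_left)
    then show ?thesis
      using \<open>hs_inner e e \<noteq> 0\<close> \<open>f e \<noteq> 0\<close> by (simp add: hs.scale_right field_simps)
  qed
  then show ?thesis by blast
qed

lemma hs_inner_eqI: "(\<And>x. hs_inner x u = hs_inner x v) \<Longrightarrow> u = (v::'a::hs_hilbert)"
  using hs_inner_definite [of "u - v"] hs.diff_right [of "u - v" u v] by simp

lemma adjoint_exists:
  assumes T: "bounded_op T"
  shows "\<exists>T'. bounded_op T' \<and> (\<forall>x y. hs_inner (T x) y = hs_inner x (T' y))"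
proof -
  obtain K where "K \<ge> 0" and K: "\<And>x. hs_norm (T x) \<le> K * hs_norm x"
    using bounded_opE [OF T] by blast
  have "\<exists>v. \<forall>x. hs_inner (T x) y = hs_inner x v" for y
  proof -
    have "cmod (hs_inner (T x) y) \<le> (K * hs_norm y) * hs_norm x" for x
    proof -
      have "cmod (hs_inner (T x) y) \<le> hs_norm (T x) * hs_norm y" by (rule hs.cauchy_schwarz)
      also have "\<dots> \<le> K * hs_norm x * hs_norm y" by (rule mult_right_mono [OF K]) simp
      finally show ?thesis by (simp add: ac_simps)
    qed
    then show ?thesis
      using riesz_representation [of "\<lambda>x. hs_inner (T x) y" "K * hs_norm y"]
      by (simp add: bounded_op_add [OF T] bounded_op_scale [OF T] hs_inner_add_left hs_inner_scale_left)
  qed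
  then have "\<exists>T'. \<forall>y x. hs_inner (T x) y = hs_inner x (T' y)" by (intro choice allI) blast
  then obtain T' where T': "\<And>x y. hs_inner (T x) y = hs_inner x (T' y)" by blast
  have "hs_norm (T' y) \<le> K * hs_norm y" for y
  proof -
    have "(hs_norm (T' y))\<^sup>2 = Re (hs_inner (T (T' y)) y)"
      by (simp add: T' hs.power2_seminorm)
    also have "\<dots> \<le> hs_norm (T (T' y)) * hs_norm y" by (rule hs.Re_le_seminorm_mult)
    also have "\<dots> \<le> (K * hs_norm y) * hs_norm (T' y)"
      using mult_right_mono [OF K [of "T' y"], of "hs_norm y"] by (simp add: ac_simps)
    finally show ?thesis by (rule power2_le_mult_imp_le) (simp add: \<open>K \<ge> 0\<close>)
  qed
  moreover have "T' (x + y) = T' x + T' y" "T' (a *\<^sub>C x) = a *\<^sub>C T' x" for a x y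
    by (rule hs_inner_eqI; simp add: T' [symmetric] hs.add_right hs.scale_right)+
  ultimately show ?thesis using T' unfolding bounded_op_def by blast
qed

lemma hs_inner_hs_adj: "bounded_op T \<Longrightarrow> hs_inner (T x) y = hs_inner x (hs_adj T y)"
  unfolding hs_adj_def by (rule someI2_ex [OF adjoint_exists]) auto

section \<open>Positive operators and \<open>A\<close>-bounded operators\<close>

definition A_adjoint_pair :: "('a::hs_hilbert \<Rightarrow> 'a) \<Rightarrow> ('a \<Rightarrow> 'a) \<Rightarrow> ('a \<Rightarrow> 'a) \<Rightarrow> bool" where
  "A_adjoint_pair A T U \<longleftrightarrow> (\<forall>x y. hs_inner (A (T x)) y = hs_inner (A x) (U y))"

definition A_bounded :: "('a::hs_hilbert \<Rightarrow> 'a) \<Rightarrow> ('a \<Rightarrow> 'a) \<Rightarrow> bool" where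
  "A_bounded A T \<longleftrightarrow> (\<exists>c. \<forall>x. A_norm A (T x) \<le> c * A_norm A x)"

lemma Sup_insert_0_upper:
  fixes g :: "'b \<Rightarrow> real"
  assumes "\<And>z. z \<in> U \<Longrightarrow> g z \<le> C" and "z \<in> U"
  shows "g z \<le> Sup (insert 0 (g ` U))"
proof (rule cSup_upper)
  show "bdd_above (insert 0 (g ` U))" using assms(1) by (intro bdd_aboveI [of _ "max C 0"]) force
qed (use assms(2) in simp)

lemma Sup_insert_0_nonneg:
  fixes g :: "'b \<Rightarrow> real"
  assumes "\<And>z. z \<in> U \<Longrightarrow> g z \<le> C"
  shows "0 \<le> Sup (insert 0 (g ` U))"
proof (rule cSup_upper)
  show "bdd_above (insert 0 (g ` U))" using assms by (intro bdd_aboveI [of _ "max C 0"]) force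
qed simp

lemma A_dwrad_power2_le:
  assumes "0 \<le> M"
    and "\<And>z. A_norm A z = 1 \<Longrightarrow> (cmod (hs_inner (A (S z)) z))\<^sup>2 + (A_norm A (S z)) ^ 4 \<le> M"
  shows "(A_dwrad A S)\<^sup>2 \<le> M"
proof -
  let ?g = "\<lambda>z. sqrt ((cmod (hs_inner (A (S z)) z))\<^sup>2 + (A_norm A (S z)) ^ 4)"
  have g: "?g z \<le> sqrt M" if "z \<in> {z. A_norm A z = 1}" for z
    using assms(2) that by simp
  have "A_dwrad A S \<le> sqrt M"
    unfolding A_dwrad_def by (rule cSup_least) (use g assms(1) in auto)
  moreover have "0 \<le> A_dwrad A S"
    unfolding A_dwrad_def by (rule Sup_insert_0_nonneg [OF g])
  ultimately have "(A_dwrad A S)\<^sup>2 \<le> (sqrt M)\<^sup>2" by (rule power_mono)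
  then show ?thesis using assms(1) by simp
qed

locale positive_operator =
  fixes A :: "'a::hs_hilbert \<Rightarrow> 'a"
  assumes positive: "positive_op A"
begin

lemma bounded: "bounded_op A"
  using positive by (simp add: positive_op_def)

text \<open>Polarization: \<open>\<langle>A x, x\<rangle>\<close> real for all \<open>x\<close> makes \<open>A\<close> self-adjoint.\<close>
lemma inner_commute: "hs_inner (A x) y = hs_inner x (A y)"
proof -
  let ?q = "\<lambda>u v. hs_inner (A u) v"
  have im: "Im (?q u u) = 0" for u using positive by (simp add: positive_op_def)
  have "?q (x + y) (x + y) = ?q x x + ?q x y + ?q y x + ?q y y"
    by (simp add: bounded_op_add [OF bounded] hs_inner_add_left hs.add_right)
  then have "Im (?q x y) + Im (?q y x) = 0" using im [of "x + y"] im [of x] im [of y] by simp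
  moreover have "?q (x + \<i> *\<^sub>C y) (x + \<i> *\<^sub>C y) = ?q x x - \<i> * ?q x y + \<i> * ?q y x + ?q y y"
    by (simp add: bounded_op_add [OF bounded] bounded_op_scale [OF bounded] hs_inner_add_left
        hs.add_right hs_inner_scale_left hs.scale_right algebra_simps)
  then have "Re (?q y x) - Re (?q x y) = 0" using im [of "x + \<i> *\<^sub>C y"] im [of x] im [of y] by simp
  ultimately have "?q y x = cnj (?q x y)" by (simp add: complex_eq_iff)
  then show ?thesis using hs_inner_commute [of x "A y"] by simp
qed

sublocale A_inner: semi_inner_product "\<lambda>x y. hs_inner (A x) y"
  rewrites "semi_inner_product.seminorm (\<lambda>x y. hs_inner (A x) y) = A_norm A"
proof -
  show "semi_inner_product (\<lambda>x y. hs_inner (A x) y)"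
  proof
    show "hs_inner (A (x + y)) z = hs_inner (A x) z + hs_inner (A y) z" for x y z
      by (simp add: bounded_op_add [OF bounded] hs_inner_add_left)
    show "hs_inner (A (a *\<^sub>C x)) y = a * hs_inner (A x) y" for a x y
      by (simp add: bounded_op_scale [OF bounded] hs_inner_scale_left)
    show "hs_inner (A y) x = cnj (hs_inner (A x) y)" for x y
      using inner_commute [of y x] hs_inner_commute [of y "A x"] by simp
    show "0 \<le> Re (hs_inner (A x) x)" for x
      using positive by (simp add: positive_op_def)
  qed
  then show "semi_inner_product.seminorm (\<lambda>x y. hs_inner (A x) y) = A_norm A"
    by (simp add: fun_eq_iff semi_inner_product.seminorm_def A_norm_def)
qed

lemma A_boundedE:
  assumes "A_bounded A T"
  obtains c where "c \<ge> 0" "\<And>x. A_norm A (T x) \<le> c * A_norm A x"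
proof -
  obtain c where c: "\<And>x. A_norm A (T x) \<le> c * A_norm A x" using assms unfolding A_bounded_def by blast
  have "A_norm A (T x) \<le> max c 0 * A_norm A x" for x
    using c [of x] mult_right_mono [of c "max c 0" "A_norm A x"] by simp
  then show ?thesis using that [of "max c 0"] by simp
qed

lemma A_mp_inv_A: "A (mp_inv A (A w)) = A w"
proof -
  obtain m where "A m = 0" and orth: "\<And>v. A v = 0 \<Longrightarrow> hs_inner (w - m) v = 0"
    using orthogonal_projection_exists [OF closed_subspace_kernel [OF bounded], of w] by auto
  define x0 where "x0 = w - m"
  have Ax0: "A x0 = A w" using \<open>A m = 0\<close> by (simp add: x0_def bounded_op_diff [OF bounded])
  let ?P = "\<lambda>x. (\<forall>z. A z = 0 \<longrightarrow> hs_inner x z = 0) \<and> (\<forall>w'. hs_inner (A w - A x) (A w') = 0)"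
  have "?P x0" using orth Ax0 by (simp add: x0_def)
  moreover have "x = x0" if "?P x" for x
  proof -
    have "hs_inner (A (w - x)) (A (w - x)) = 0"
      using that [THEN conjunct2, rule_format, of "w - x"] by (simp add: bounded_op_diff [OF bounded])
    then have "A x = A w" using hs_inner_definite [of "A (w - x)"] by (simp add: bounded_op_diff [OF bounded])
    then have "A (x - x0) = 0" using Ax0 by (simp add: bounded_op_diff [OF bounded])
    then have "hs_inner (x - x0) (x - x0) = 0" using that \<open>?P x0\<close> by (simp add: hs.diff_left)
    then show ?thesis using hs_inner_definite [of "x - x0"] by simp
  qed
  ultimately have "mp_inv A (A w) = x0" unfolding mp_inv_def by (rule the_equality)
  then show ?thesis using Ax0 by simp
qed

lemma A_norm_le_hs_norm: "\<exists>C\<ge>0. \<forall>y. A_norm A y \<le> C * hs_norm y"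
proof -
  obtain K where "K \<ge> 0" and K: "\<And>x. hs_norm (A x) \<le> K * hs_norm x"
    using bounded_opE [OF bounded] by blast
  have "A_norm A y \<le> sqrt K * hs_norm y" for y
  proof -
    have "(A_norm A y)\<^sup>2 \<le> hs_norm (A y) * hs_norm y"
      using hs.Re_le_seminorm_mult [of "A y" y] by (simp add: A_inner.power2_seminorm)
    also have "\<dots> \<le> K * hs_norm y * hs_norm y" by (rule mult_right_mono [OF K]) simp
    also have "\<dots> = (sqrt K * hs_norm y)\<^sup>2"
      using \<open>K \<ge> 0\<close> by (simp add: power_mult_distrib power2_eq_square)
    finally show ?thesis by (rule power2_le_imp_le) (simp add: \<open>K \<ge> 0\<close>)
  qed
  then show ?thesis using \<open>K \<ge> 0\<close> by (intro exI [of _ "sqrt K"]) simp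
qed

text \<open>Squaring the Cauchy--Schwarz bound \<open>\<parallel>V x\<parallel>\<^sub>A\<^sup>2 = \<langle>V\<^sup>2 x, x\<rangle>\<^sub>A \<le> \<parallel>V\<^sup>2 x\<parallel>\<^sub>A \<parallel>x\<parallel>\<^sub>A\<close> \<open>n\<close> times.\<close>
lemma A_norm_pow2_le_funpow:
  assumes "A_adjoint_pair A V V"
  shows "(A_norm A (V x)) ^ (2 ^ n) \<le> A_norm A ((V ^^ (2 ^ n)) x) * (A_norm A x) ^ (2 ^ n - 1)"
  using assms
proof (induction n arbitrary: V)
  case (Suc n)
  have "A_adjoint_pair A (V ^^ 2) (V ^^ 2)"
    using Suc.prems by (simp add: A_adjoint_pair_def numeral_2_eq_2)
  from Suc.IH [OF this]
  have IH: "(A_norm A ((V ^^ 2) x)) ^ (2 ^ n) \<le> A_norm A ((V ^^ (2 ^ Suc n)) x) * (A_norm A x) ^ (2 ^ n - 1)"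
    by (simp add: funpow_mult [symmetric] mult.commute)
  have "(V ^^ 2) x = V (V x)" by (simp add: numeral_2_eq_2)
  then have "(A_norm A (V x))\<^sup>2 = Re (hs_inner (A ((V ^^ 2) x)) x)"
    using Suc.prems [unfolded A_adjoint_pair_def, rule_format, of "V x" x]
    by (simp add: A_inner.power2_seminorm)
  also have "\<dots> \<le> A_norm A ((V ^^ 2) x) * A_norm A x"
    by (rule A_inner.Re_le_seminorm_mult)
  finally have "((A_norm A (V x))\<^sup>2) ^ (2 ^ n) \<le> (A_norm A ((V ^^ 2) x) * A_norm A x) ^ (2 ^ n)"
    by (rule power_mono) simp
  also have "\<dots> \<le> A_norm A ((V ^^ (2 ^ Suc n)) x) * (A_norm A x) ^ (2 ^ n - 1) * (A_norm A x) ^ (2 ^ n)"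
    unfolding power_mult_distrib by (rule mult_right_mono [OF IH]) simp
  also have "\<dots> = A_norm A ((V ^^ (2 ^ Suc n)) x) * (A_norm A x) ^ (2 ^ Suc n - 1)"
  proof -
    have "(2::nat) ^ n - 1 + 2 ^ n = 2 ^ Suc n - 1" using one_le_power [of 2 n] by simp
    then show ?thesis by (simp only: mult.assoc power_add [symmetric])
  qed
  finally show ?case by (simp add: power_mult [symmetric] mult.commute)
qed simp

lemma A_bounded_if_A_selfadjoint:
  assumes "bounded_op V" and "A_adjoint_pair A V V"
  shows "A_bounded A V"
proof -
  obtain C where "C \<ge> 0" and C: "\<And>y. A_norm A y \<le> C * hs_norm y" using A_norm_le_hs_norm by blast
  obtain K where "K \<ge> 0" and K: "\<And>x. hs_norm (V x) \<le> K * hs_norm x"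
    using bounded_opE [OF assms(1)] by blast
  have K1: "hs_norm (V x) \<le> (K + 1) * hs_norm x" for x
    using K [of x] by (simp add: distrib_right add_increasing2)
  have pow: "(A_norm A (V x)) ^ (2 ^ n) \<le> C * (K + 1) ^ (2 ^ n) * hs_norm x * (A_norm A x) ^ (2 ^ n - 1)"
    for x n
  proof -
    have "A_norm A ((V ^^ (2 ^ n)) x) \<le> C * hs_norm ((V ^^ (2 ^ n)) x)" by (rule C)
    also have "\<dots> \<le> C * ((K + 1) ^ (2 ^ n) * hs_norm x)"
      using funpow_hs_norm_le [of "K + 1" V, OF _ K1] \<open>K \<ge> 0\<close> \<open>C \<ge> 0\<close> by (simp add: mult_left_mono)
    finally have "A_norm A ((V ^^ (2 ^ n)) x) * (A_norm A x) ^ (2 ^ n - 1)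
        \<le> C * ((K + 1) ^ (2 ^ n) * hs_norm x) * (A_norm A x) ^ (2 ^ n - 1)"
      by (rule mult_right_mono) simp
    with A_norm_pow2_le_funpow [OF assms(2), of x n] show ?thesis
      by (simp only: mult.assoc)
  qed
  have "A_norm A (V x) \<le> (K + 1) * A_norm A x" for x
  proof (cases "A_norm A x = 0")
    case True
    then have "(A_norm A (V x))\<^sup>2 \<le> 0" using pow [of x 1] by simp
    then show ?thesis using True by simp
  next
    case False
    then have "A_norm A x > 0" using A_inner.seminorm_nonneg [of x] by linarith
    show ?thesis
    proof (rule power_two_power_le_imp_le)
      show "0 < (K + 1) * A_norm A x" using \<open>A_norm A x > 0\<close> \<open>K \<ge> 0\<close> by simp
      fix n :: nat
      obtain M where M: "(2::nat) ^ n = Suc M" using not0_implies_Suc [of "2 ^ n"] by auto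
      have "C * (K + 1) ^ (2 ^ n) * hs_norm x * (A_norm A x) ^ (2 ^ n - 1)
          = (C * hs_norm x / A_norm A x) * ((K + 1) * A_norm A x) ^ (2 ^ n)"
        using \<open>A_norm A x > 0\<close> unfolding M power_mult_distrib by (simp add: field_simps)
      then show "(A_norm A (V x)) ^ (2 ^ n) \<le> (C * hs_norm x / A_norm A x) * ((K + 1) * A_norm A x) ^ (2 ^ n)"
        using pow [of x n] by simp
    qed
  qed
  then show ?thesis unfolding A_bounded_def by blast
qed

lemma A_adjoint_pair_comp:
  "A_adjoint_pair A T U \<Longrightarrow> A_adjoint_pair A T' U' \<Longrightarrow> A_adjoint_pair A (T' \<circ> T) (U \<circ> U')"
  by (simp add: A_adjoint_pair_def)

lemma A_adjoint_pair_swap: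
  assumes "A_adjoint_pair A T U"
  shows "A_adjoint_pair A U T"
  unfolding A_adjoint_pair_def
proof (intro allI)
  fix x y
  have "hs_inner (A (U x)) y = cnj (hs_inner (A y) (U x))" by (rule A_inner.commute)
  also have "hs_inner (A y) (U x) = hs_inner (A (T y)) x" using assms by (simp add: A_adjoint_pair_def)
  also have "cnj (hs_inner (A (T y)) x) = hs_inner (A x) (T y)" by (rule A_inner.commute [symmetric])
  finally show "hs_inner (A (U x)) y = hs_inner (A x) (T y)" .
qed

lemma A_bounded_if_adjoint_comp:
  assumes "A_adjoint_pair A T U" and "A_bounded A (U \<circ> T)"
  shows "A_bounded A T"
proof -
  obtain c where "c \<ge> 0" and c: "\<And>x. A_norm A (U (T x)) \<le> c * A_norm A x"
    using A_boundedE [OF assms(2)] by auto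
  have "A_norm A (T x) \<le> sqrt c * A_norm A x" for x
  proof -
    have "(A_norm A (T x))\<^sup>2 = Re (hs_inner (A x) (U (T x)))"
      using assms(1) by (simp add: A_inner.power2_seminorm A_adjoint_pair_def)
    also have "\<dots> \<le> A_norm A x * A_norm A (U (T x))" by (rule A_inner.Re_le_seminorm_mult)
    also have "\<dots> \<le> A_norm A x * (c * A_norm A x)" by (rule mult_left_mono [OF c]) simp
    also have "\<dots> = (sqrt c * A_norm A x)\<^sup>2"
      using \<open>c \<ge> 0\<close> by (simp add: power_mult_distrib power2_eq_square)
    finally show ?thesis by (rule power2_le_imp_le) (simp add: \<open>c \<ge> 0\<close>)
  qed
  then show ?thesis unfolding A_bounded_def by blast
qed

lemma A_bounded_if_adjoint_bounded:
  assumes "A_adjoint_pair A T U" and "A_bounded A U"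
  shows "A_bounded A T"
proof -
  obtain c where "c \<ge> 0" and c: "\<And>x. A_norm A (U x) \<le> c * A_norm A x"
    using A_boundedE [OF assms(2)] by auto
  have "A_norm A (T x) \<le> c * A_norm A x" for x
  proof -
    have "(A_norm A (T x))\<^sup>2 = Re (hs_inner (A x) (U (T x)))"
      using assms(1) by (simp add: A_inner.power2_seminorm A_adjoint_pair_def)
    also have "\<dots> \<le> A_norm A x * A_norm A (U (T x))" by (rule A_inner.Re_le_seminorm_mult)
    also have "\<dots> \<le> (c * A_norm A x) * A_norm A (T x)"
      using mult_left_mono [OF c [of "T x"], of "A_norm A x"] by (simp add: ac_simps)
    finally show ?thesis by (rule power2_le_mult_imp_le) (simp add: \<open>c \<ge> 0\<close>)
  qed
  then show ?thesis unfolding A_bounded_def by blast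
qed

lemma A_bounded_comp:
  assumes "A_bounded A T" and "A_bounded A U"
  shows "A_bounded A (\<lambda>x. T (U x))"
proof -
  obtain c where "c \<ge> 0" and c: "\<And>x. A_norm A (T x) \<le> c * A_norm A x"
    using A_boundedE [OF assms(1)] by auto
  obtain d where d: "\<And>x. A_norm A (U x) \<le> d * A_norm A x"
    using A_boundedE [OF assms(2)] by auto
  have "A_norm A (T (U x)) \<le> (c * d) * A_norm A x" for x
  proof -
    have "A_norm A (T (U x)) \<le> c * A_norm A (U x)" by (rule c)
    also have "\<dots> \<le> c * (d * A_norm A x)" using d \<open>c \<ge> 0\<close> by (rule mult_left_mono)
    finally show ?thesis by (simp add: mult.assoc)
  qed
  then show ?thesis unfolding A_bounded_def by blast
qed

lemma A_bounded_add:
  assumes "A_bounded A T" and "A_bounded A U"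
  shows "A_bounded A (\<lambda>x. T x + U x)"
proof -
  obtain c where c: "\<And>x. A_norm A (T x) \<le> c * A_norm A x"
    using A_boundedE [OF assms(1)] by auto
  obtain d where d: "\<And>x. A_norm A (U x) \<le> d * A_norm A x"
    using A_boundedE [OF assms(2)] by auto
  have "A_norm A (T x + U x) \<le> (c + d) * A_norm A x" for x
    using A_inner.seminorm_triangle [of "T x" "U x"] c [of x] d [of x] by (simp add: distrib_right)
  then show ?thesis unfolding A_bounded_def by blast
qed

lemma A_bounded_on_unit_sphere:
  assumes "A_bounded A T"
  obtains c where "\<And>z. z \<in> {z. A_norm A z = 1} \<Longrightarrow> A_norm A (T z) \<le> c"
proof -
  obtain c where c: "\<And>x. A_norm A (T x) \<le> c * A_norm A x" using A_boundedE [OF assms] by auto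
  show ?thesis
  proof (rule that)
    fix z assume "z \<in> {z. A_norm A z = 1}"
    then show "A_norm A (T z) \<le> c" using c [of z] by simp
  qed
qed

lemma A_numrad_bounds:
  assumes "A_bounded A T"
  shows "0 \<le> A_numrad A T" and "A_norm A z = 1 \<Longrightarrow> cmod (hs_inner (A (T z)) z) \<le> A_numrad A T"
proof -
  obtain c where c: "\<And>z. z \<in> {z. A_norm A z = 1} \<Longrightarrow> A_norm A (T z) \<le> c"
    using A_bounded_on_unit_sphere [OF assms] by blast
  have bound: "cmod (hs_inner (A (T u)) u) \<le> c" if "u \<in> {u. A_norm A u = 1}" for u
    using A_inner.cauchy_schwarz [of "T u" u] c [OF that] that by simp
  show "0 \<le> A_numrad A T"
    unfolding A_numrad_def by (rule Sup_insert_0_nonneg [OF bound])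
  show "cmod (hs_inner (A (T z)) z) \<le> A_numrad A T" if "A_norm A z = 1"
    unfolding A_numrad_def using that by (intro Sup_insert_0_upper [OF bound]) simp_all
qed

lemma A_opnorm_bounds:
  assumes "A_bounded A T"
  shows "0 \<le> A_opnorm A T" and "A_norm A z = 1 \<Longrightarrow> A_norm A (T z) \<le> A_opnorm A T"
proof -
  obtain c where c: "\<And>z. z \<in> {z. A_norm A z = 1} \<Longrightarrow> A_norm A (T z) \<le> c"
    using A_bounded_on_unit_sphere [OF assms] by blast
  show "0 \<le> A_opnorm A T"
    unfolding A_opnorm_def by (rule Sup_insert_0_nonneg [OF c])
  show "A_norm A (T z) \<le> A_opnorm A T" if "A_norm A z = 1"
    unfolding A_opnorm_def using that by (intro Sup_insert_0_upper [OF c]) simp_all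
qed

lemma A_A_adj:
  assumes "S \<in> BA A"
  shows "A (A_adj A S u) = hs_adj S (A u)"
proof -
  obtain R where R: "A \<circ> R = hs_adj S \<circ> A" using assms by (auto simp: BA_def)
  have "A (R u) = hs_adj S (A u)" using fun_cong [OF R, of u] by simp
  then show ?thesis using A_mp_inv_A [of "R u"] by (simp add: A_adj_def)
qed

lemma A_adjoint_pair_A_adj:
  assumes "S \<in> BA A"
  shows "A_adjoint_pair A (A_adj A S) S"
  unfolding A_adjoint_pair_def
proof (intro allI)
  fix u v
  have "bounded_op S" using assms by (simp add: BA_def)
  have "hs_inner (A (A_adj A S u)) v = cnj (hs_inner v (hs_adj S (A u)))"
    using hs_inner_commute [of "hs_adj S (A u)" v] by (simp add: A_A_adj [OF assms])
  also have "\<dots> = hs_inner (A u) (S v)"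
    using hs_inner_hs_adj [OF \<open>bounded_op S\<close>, of v "A u"] hs_inner_commute [of "A u" "S v"]
    by simp
  finally show "hs_inner (A (A_adj A S u)) v = hs_inner (A u) (S v)" .
qed

lemma A_bounded_BA:
  assumes "S \<in> BA A"
  shows "A_bounded A S"
proof -
  obtain R where "bounded_op S" "bounded_op R" and R: "A \<circ> R = hs_adj S \<circ> A"
    using assms by (auto simp: BA_def)
  have "A_adjoint_pair A S R"
    unfolding A_adjoint_pair_def
  proof (intro allI)
    fix x y
    have "hs_inner (A (S x)) y = hs_inner (S x) (A y)" by (rule inner_commute)
    also have "\<dots> = hs_inner x (A (R y))"
      using hs_inner_hs_adj [OF \<open>bounded_op S\<close>, of x "A y"] fun_cong [OF R, of y] by simp
    also have "\<dots> = hs_inner (A x) (R y)" by (rule inner_commute [symmetric])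
    finally show "hs_inner (A (S x)) y = hs_inner (A x) (R y)" .
  qed
  moreover have "A_bounded A (R \<circ> S)"
  proof (rule A_bounded_if_A_selfadjoint)
    show "bounded_op (R \<circ> S)" using \<open>bounded_op R\<close> \<open>bounded_op S\<close> by (rule bounded_op_comp)
    show "A_adjoint_pair A (R \<circ> S) (R \<circ> S)"
      using A_adjoint_pair_comp [OF \<open>A_adjoint_pair A S R\<close> A_adjoint_pair_swap [OF \<open>A_adjoint_pair A S R\<close>]]
      by simp
  qed
  ultimately show ?thesis by (rule A_bounded_if_adjoint_comp)
qed

lemma A_bounded_A_adj: "S \<in> BA A \<Longrightarrow> A_bounded A (A_adj A S)"
  by (rule A_bounded_if_adjoint_bounded [OF A_adjoint_pair_A_adj A_bounded_BA])

end

theorem corollary2p3: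
  fixes A S :: "'a::hs_hilbert \<Rightarrow> 'a"
  assumes "positive_op A"
    and "S \<in> BA A"
  shows "(A_dwrad A S)\<^sup>2 \<le>
           (A_numrad A (\<lambda>x. A_adj A S (S x) + S x))\<^sup>2
         + A_numrad A (\<lambda>x. A_adj A S (S (S x)))
         + 1/2 * A_opnorm A (\<lambda>x. A_adj A S (S (A_adj A S (S x))) + A_adj A S (S x))"
proof -
  interpret positive_operator A by unfold_locales (rule assms(1))
  let ?T = "A_adj A S"
  have S: "A_bounded A S" and T: "A_bounded A ?T"
    using A_bounded_BA A_bounded_A_adj assms(2) by blast+
  have TS: "A_bounded A (\<lambda>x. ?T (S x))" using T S by (rule A_bounded_comp)
  have P: "A_bounded A (\<lambda>x. ?T (S x) + S x)" using TS S by (rule A_bounded_add)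
  have Q: "A_bounded A (\<lambda>x. ?T (S (S x)))" using TS S by (rule A_bounded_comp)
  have W: "A_bounded A (\<lambda>x. ?T (S (?T (S x))) + ?T (S x))"
    using A_bounded_comp [OF TS TS] TS by (rule A_bounded_add)
  show ?thesis
  proof (rule A_dwrad_power2_le)
    fix z assume z: "A_norm A z = 1"
    have "(cmod (hs_inner (A (?T (S z) + S z)) z))\<^sup>2 \<le> (A_numrad A (\<lambda>x. ?T (S x) + S x))\<^sup>2"
      using A_numrad_bounds (2) [OF P z] by (simp add: power_mono)
    moreover note A_numrad_bounds (2) [OF Q z] A_opnorm_bounds (2) [OF W z]
    moreover have "\<And>u v. hs_inner (A (?T u)) v = hs_inner (A u) (S v)"
      using A_adjoint_pair_A_adj [OF assms(2)] by (simp add: A_adjoint_pair_def)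
    note A_inner.davis_wielandt_bound [OF this z]
    ultimately show "(cmod (hs_inner (A (S z)) z))\<^sup>2 + (A_norm A (S z)) ^ 4
      \<le> (A_numrad A (\<lambda>x. ?T (S x) + S x))\<^sup>2 + A_numrad A (\<lambda>x. ?T (S (S x)))
        + 1/2 * A_opnorm A (\<lambda>x. ?T (S (?T (S x))) + ?T (S x))"
      by linarith
  qed (use A_numrad_bounds (1) [OF Q] A_opnorm_bounds (1) [OF W] in simp)
qed

end
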